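(* Consider the SR2 method (described in the context) applied to $\min_x F(x) := f(x) + \mathcal{R}(x)$, and suppose Assumptions (A1), (A3) and (A5) of the context hold. Let $0<\epsilon<1$ and let $t(\epsilon)$ be the first iteration with $\mathbb{E}_{\hat\xi_{t}}[\|s^\xi\|^2]\le\epsilon^2$. If $\mathbb{E}_{\hat\xi_{t(\epsilon)}}[\|\nabla f(x_{t(\epsilon)}) - g^\xi\|^2]\le\epsilon^2$, then $x_{t(\epsilon)}$ is a $\widehat{(\delta,(C+3)\epsilon)}$-stationary point, where $C = 3(L^2+\sigma_{\max}^2)$ and $\delta = \max_{\hat\xi}\|s^\xi\|$.
   Context: Problem: $F(x) = f(x) + \mathcal{R}(x)$ with $f(x) = \frac{1}{N}\sum_{i=1}^N f_i(x)$, $f_i:\mathbb{R}^n\to\mathbb{R}$ differentiable, and $\mathcal{R}:\mathbb{R}^n \to \mathbb{R}\cup\{\pm\infty\}$. For a nonempty sample $\xi \subseteq \{1,\dots,N\}$ set $f(x,\xi) := \frac{1}{|\xi|}\sum_{j\in\xi} f_j(x)$ and $\nabla f(x,\xi) := \frac{1}{|\xi|}\sum_{j\in\xi}\nabla f_j(x)$. A function $\mathcal{R}$ is proper if it never equals $-\infty$ and is finite somewhere; it is prox-bounded if there are $x$ and $\mu>0$ with $\inf_w \{\tfrac{1}{2}\mu^{-1}\|x-w\|^2 + \mathcal{R}(w)\} > -\infty$; the supremum of such $\mu$ is its prox-boundedness threshold. The Fréchet subdifferential $\hat\partial\phi(\bar x)$ of $\phi$ at a point $\bar x$ where $\phi$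 is finite is the set of $v$ with $\liminf_{x\to\bar x, x\ne\bar x} \frac{\phi(x)-\phi(\bar x)-v^T(x-\bar x)}{\|x-\bar x\|}\ge 0$. SR2 algorithm: parameters $0<\eta_1\le\eta_2<1$, $0<\gamma_3\le 1<\gamma_1\le\gamma_2$, a starting point $x_0$ where $\mathcal{R}$ is finite, $\sigma_0 \ge \sigma_{\min} > 0$. At iteration $t$: draw a random sample $\xi_t$, set $g_t := \nabla f(x_t,\xi_t)$, $\psi(s;x_t) := f(x_t,\xi_t) + g_t^T s + \mathcal{R}(x_t+s)$, $m(s;x_t,\sigma_t) := \psi(s;x_t) + \tfrac12\sigma_t\|s\|^2$, and compute $s_t \in \operatorname{argmin}_s m(s;x_t,\sigma_t)$ (if the sample is deemed inadequate, $s_t$ is set to $0$). Compute $\Delta F_t := F(x_t) - F(x_t+s_t)$, $\Delta\psi_t := \psi(0;x_t)-\psi(s_t;x_t)$, $\rho_t := \Delta F_t/\Delta\psi_t$ (with the convention $\rho_t = 0$ when $\Delta\psi_t = +\infty$). If $\rho_t \ge \eta_1$ (a successful iteration) set $x_{t+1} = x_t + s_t$, else $x_{t+1}=x_t$. Then choose $\sigma_{t+1} \in [\max(\sigma_{\min},\gamma_3\sigma_t),\sigma_t]$ if $\rho_t\ge\eta_2$; $\sigma_{t+1}\in[\sigma_t,\gamma_1\sigma_t]$ if $\eta_1\le\rho_t<\eta_2$; $\sigma_{t+1}\in[\gamma_1\sigma_t,\gamma_2\sigma_t]$ if $\rho_t<\eta_1$. Assumptions. (A1): there is $L>0$ with $\|\nabla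 f(x)-\nabla f(y)\|\le L\|x-y\|$ for all $x,y$; $\mathcal{R}$ is proper and lower semicontinuous everywhere, and $s\mapsto\mathcal{R}(x_t+s)$ is prox-bounded, with threshold $\lambda_{x_t}$, for every iterate $x_t$. (A3): there is $\kappa_m>0$ such that for all $t$, $|f(x_t+s_t)-f(x_t)-g_t^Ts_t| \le \kappa_m\|s_t\|^2$; moreover $\mathbb{E}_\xi[f(x_t,\xi)] = f(x_t)$ and $\mathbb{E}_\xi[g_t] = \nabla f(x_t)$. (A5): there is $\lambda>0$ with $\lambda_{x_t}\ge\lambda$ for all iterates $x_t$. Notation: $\sigma_{\max}$ is a constant with $\sigma_t\le\sigma_{\max}$ for all $t$ (e.g. $\max\{\sigma_0,\gamma_2\sigma_{\textup{succ}}\}$ with $\sigma_{\textup{succ}} := \max(2\kappa_m/(1-\eta_2),1/\lambda)$). For a sample $\xi$ drawn at iterate $x$, $g^\xi := \nabla f(x,\xi)$ and $s^\xi$ is the corresponding SR2 step; $\mathbb{E}_{\hat\xi}$ (or $\mathbb{E}_{\hat\xi_t}$ at iterate $x_t$) denotes expectation over the distribution of samples $\xi$ that yield a successful iteration at that iterate, and $\max_{\hat\xi}$ the maximum over such samples. Definition: a point $x$ is $\widehat{(\delta,\epsilon')}$-stationary if $\mathbb{E}_{\hat\xi}\big[\operatorname{dist}(0,\hat\partial F(x+s^\xi))^2\big]\le\epsilon'^2$ with $\delta = \max_{\hat\xi}\|s^\xi\|$. *)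

theory Defs
  imports "HOL-Probability.Probability"
begin

definition fbar :: "(nat \<Rightarrow> 'a \<Rightarrow> real) \<Rightarrow> nat \<Rightarrow> 'a \<Rightarrow> real" where
  "fbar fs N x = (\<Sum>i=1..N. fs i x) / real N"

definition gbar :: "(nat \<Rightarrow> 'a \<Rightarrow> 'a::real_vector) \<Rightarrow> nat \<Rightarrow> 'a \<Rightarrow> 'a" where
  "gbar gs N x = (1 / real N) *\<^sub>R (\<Sum>i=1..N. gs i x)"

definition fsamp :: "(nat \<Rightarrow> 'a \<Rightarrow> real) \<Rightarrow> nat set \<Rightarrow> 'a \<Rightarrow> real" where
  "fsamp fs \<xi> x = (\<Sum>j\<in>\<xi>. fs j x) / real (card \<xi>)"

definition gsamp :: "(nat \<Rightarrow> 'a \<Rightarrow> 'a::real_vector) \<Rightarrow> nat set \<Rightarrow> 'a \<Rightarrow> 'a" where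
  "gsamp gs \<xi> x = (1 / real (card \<xi>)) *\<^sub>R (\<Sum>j\<in>\<xi>. gs j x)"

definition Fobj :: "(nat \<Rightarrow> 'a \<Rightarrow> real) \<Rightarrow> nat \<Rightarrow> ('a \<Rightarrow> ereal) \<Rightarrow> 'a \<Rightarrow> ereal" where
  "Fobj fs N R x = ereal (fbar fs N x) + R x"

definition psi :: "(nat \<Rightarrow> 'a \<Rightarrow> real) \<Rightarrow> (nat \<Rightarrow> 'a \<Rightarrow> 'a::real_inner) \<Rightarrow> ('a \<Rightarrow> ereal)
    \<Rightarrow> nat set \<Rightarrow> 'a \<Rightarrow> 'a \<Rightarrow> ereal" where
  "psi fs gs R \<xi> x s = ereal (fsamp fs \<xi> x + inner (gsamp gs \<xi> x) s) + R (x + s)"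

definition model :: "(nat \<Rightarrow> 'a \<Rightarrow> real) \<Rightarrow> (nat \<Rightarrow> 'a \<Rightarrow> 'a::real_inner) \<Rightarrow> ('a \<Rightarrow> ereal)
    \<Rightarrow> nat set \<Rightarrow> 'a \<Rightarrow> real \<Rightarrow> 'a \<Rightarrow> ereal" where
  "model fs gs R \<xi> x \<sigma> s = psi fs gs R \<xi> x s + ereal (\<sigma> / 2 * (norm s)\<^sup>2)"

definition is_argmin_model :: "(nat \<Rightarrow> 'a \<Rightarrow> real) \<Rightarrow> (nat \<Rightarrow> 'a \<Rightarrow> 'a::real_inner) \<Rightarrow> ('a \<Rightarrow> ereal)
    \<Rightarrow> nat set \<Rightarrow> 'a \<Rightarrow> real \<Rightarrow> 'a \<Rightarrow> bool" where
  "is_argmin_model fs gs R \<xi> x \<sigma> s \<longleftrightarrow>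
     (\<forall>s'. model fs gs R \<xi> x \<sigma> s \<le> model fs gs R \<xi> x \<sigma> s')"

definition rho :: "(nat \<Rightarrow> 'a \<Rightarrow> real) \<Rightarrow> (nat \<Rightarrow> 'a \<Rightarrow> 'a::real_inner) \<Rightarrow> nat \<Rightarrow> ('a \<Rightarrow> ereal)
    \<Rightarrow> nat set \<Rightarrow> 'a \<Rightarrow> 'a \<Rightarrow> real" where
  "rho fs gs N R \<xi> x s =
     (let dF = Fobj fs N R x - Fobj fs N R (x + s);
          dpsi = psi fs gs R \<xi> x 0 - psi fs gs R \<xi> x s
      in if dpsi = \<infinity> then 0 else real_of_ereal dF / real_of_ereal dpsi)"

definition proper_fun :: "('a \<Rightarrow> ereal) \<Rightarrow> bool" where
  "proper_fun R \<longleftrightarrow> (\<forall>x. R x \<noteq> -\<infinity>) \<and> (\<exists>x. R x \<noteq> \<infinity> \<and> R x \<noteq> -\<infinity>)"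

definition lsc_everywhere :: "('a::topological_space \<Rightarrow> ereal) \<Rightarrow> bool" where
  "lsc_everywhere R \<longleftrightarrow> (\<forall>x. R x \<le> Liminf (at x) R)"

definition prox_bdd_with :: "('a::real_normed_vector \<Rightarrow> ereal) \<Rightarrow> real \<Rightarrow> bool" where
  "prox_bdd_with R \<mu> \<longleftrightarrow> \<mu> > 0 \<and>
     (\<exists>x. (INF w. ereal (1 / (2 * \<mu>) * (norm (x - w))\<^sup>2) + R w) > -\<infinity>)"

definition prox_bounded :: "('a::real_normed_vector \<Rightarrow> ereal) \<Rightarrow> bool" where
  "prox_bounded R \<longleftrightarrow> (\<exists>\<mu>. prox_bdd_with R \<mu>)"

definition prox_threshold :: "('a::real_normed_vector \<Rightarrow> ereal) \<Rightarrow> ereal" where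
  "prox_threshold R = Sup (ereal ` {\<mu>. prox_bdd_with R \<mu>})"

definition frechet_subdiff :: "('a::real_inner \<Rightarrow> ereal) \<Rightarrow> 'a \<Rightarrow> 'a set" where
  "frechet_subdiff \<phi> xb =
     {v. \<bar>\<phi> xb\<bar> \<noteq> \<infinity> \<and>
         Liminf (at xb) (\<lambda>x. (\<phi> x - \<phi> xb - ereal (inner v (x - xb))) / ereal (norm (x - xb))) \<ge> 0}"

text \<open>hat-(delta,eps')-stationarity at x w.r.t. the distribution P of successful samples and
  the corresponding steps s. dist(0, empty set) = +infinity is encoded by requiring all
  subdifferentials (for samples in the support) to be nonempty.\<close>
definition hat_stationary :: "('a::euclidean_space \<Rightarrow> ereal) \<Rightarrow> nat set pmf \<Rightarrow> (nat set \<Rightarrow> 'a)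
    \<Rightarrow> 'a \<Rightarrow> real \<Rightarrow> real \<Rightarrow> bool" where
  "hat_stationary F P s x \<delta> \<epsilon>' \<longleftrightarrow>
     \<delta> = Max ((\<lambda>\<xi>. norm (s \<xi>)) ` set_pmf P) \<and>
     (\<forall>\<xi>\<in>set_pmf P. frechet_subdiff F (x + s \<xi>) \<noteq> {}) \<and>
     measure_pmf.expectation P (\<lambda>\<xi>. (infdist 0 (frechet_subdiff F (x + s \<xi>)))\<^sup>2) \<le> \<epsilon>'\<^sup>2"

end

theory Submission
  imports Defs
begin

(* At a successful sample the step s is a nonzero minimizer of the model, so
   R(z) >= R(x+s) - <g + sigma s, z-(x+s)> - sigma/2 |z-(x+s)|^2 for all z. Adding the
   differentiable f turns this quadratic minorant into the Frechet subgradient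
   grad f(x+s) - g - sigma s of F at x+s. Splitting it as
   (grad f(x+s) - grad f(x)) + (grad f(x) - g) - sigma s, Lipschitz continuity and
   (a+b+c)^2 <= 3(a^2+b^2+c^2) bound its squared norm by C |s|^2 + 3 |grad f(x) - g|^2;
   taking expectations over successful samples at t(epsilon) gives (C+3) epsilon^2. *)

lemma frechet_subgradient_of_quadratic_minorant:
  fixes f :: "'a::real_inner \<Rightarrow> real" and R :: "'a \<Rightarrow> ereal"
  assumes f_deriv: "(f has_derivative (\<lambda>h. inner G h)) (at y)"
    and R_finite: "\<bar>R y\<bar> \<noteq> \<infinity>"
    and minorant: "\<And>z. R y - ereal (inner w (z - y) + \<sigma> / 2 * (norm (z - y))\<^sup>2) \<le> R z"
  shows "G - w \<in> frechet_subdiff (\<lambda>z. ereal (f z) + R z) y"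
proof -
  obtain r where r: "R y = ereal r" using R_finite by (cases "R y") auto
  define h where "h z = (f z - f y - inner G (z - y)) / norm (z - y) - \<sigma> / 2 * norm (z - y)" for z
  have "((\<lambda>z. (f z - f y - inner G (z - y)) / norm (z - y)) \<longlongrightarrow> 0) (at y)"
  proof (rule tendsto_rabs_zero_cancel)
    show "((\<lambda>z. \<bar>(f z - f y - inner G (z - y)) / norm (z - y)\<bar>) \<longlongrightarrow> 0) (at y)"
      using f_deriv by (simp add: has_derivative_iff_norm abs_divide)
  qed
  moreover have "((\<lambda>z. \<sigma> / 2 * norm (z - y)) \<longlongrightarrow> \<sigma> / 2 * norm (y - y)) (at y)"
    by (intro tendsto_intros)
  ultimately have "(h \<longlongrightarrow> 0) (at y)"
    unfolding h_def using tendsto_diff by fastforce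
  hence h_lim: "((\<lambda>z. ereal (h z)) \<longlongrightarrow> 0) (at y)"
    by (simp add: zero_ereal_def tendsto_ereal)
  have h_le: "ereal (h z) \<le>
      (ereal (f z) + R z - (ereal (f y) + R y) - ereal (inner (G - w) (z - y))) / ereal (norm (z - y))"
    if "z \<noteq> y" for z
  proof (cases "R z")
    case (real rz)
    have d: "norm (z - y) > 0" using that by simp
    have "h z * norm (z - y) = f z - f y - inner G (z - y) - \<sigma> / 2 * (norm (z - y))\<^sup>2"
      unfolding h_def using d by (simp add: field_simps power2_eq_square)
    also have "\<dots> \<le> f z + rz - (f y + r) - inner (G - w) (z - y)"
      using minorant[of z] r real by (simp add: inner_diff_left)
    finally show ?thesis
      using r real d by (simp add: ereal_divide pos_le_divide_eq)
  qed (use r minorant[of z] that in \<open>simp_all add: ereal_divide\<close>)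
  have "0 \<le> Liminf (at y) (\<lambda>z. ereal (h z))"
    using h_lim by (simp add: le_Liminf_iff order_tendstoD(1))
  also have "\<dots> \<le> Liminf (at y)
      (\<lambda>z. (ereal (f z) + R z - (ereal (f y) + R y) - ereal (inner (G - w) (z - y))) / ereal (norm (z - y)))"
    by (intro Liminf_mono) (auto simp: eventually_at_filter h_le)
  finally show ?thesis
    using r unfolding frechet_subdiff_def by simp
qed

lemma argmin_model_finite:
  assumes argmin: "is_argmin_model fs gs R \<xi> x \<sigma> s"
    and R_x: "\<bar>R x\<bar> \<noteq> \<infinity>"
    and R_xs: "R (x + s) \<noteq> -\<infinity>"
  shows "\<bar>R (x + s)\<bar> \<noteq> \<infinity>"
proof -
  have "model fs gs R \<xi> x \<sigma> s \<le> model fs gs R \<xi> x \<sigma> 0"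
    using argmin unfolding is_argmin_model_def by blast
  thus ?thesis
    using R_x R_xs unfolding model_def psi_def by (cases "R x"; cases "R (x + s)") auto
qed

lemma argmin_model_quadratic_minorant:
  assumes argmin: "is_argmin_model fs gs R \<xi> x \<sigma> s"
    and R_xs: "\<bar>R (x + s)\<bar> \<noteq> \<infinity>"
  shows "R (x + s) - ereal (inner (gsamp gs \<xi> x + \<sigma> *\<^sub>R s) (z - (x + s))
           + \<sigma> / 2 * (norm (z - (x + s)))\<^sup>2) \<le> R z"
proof -
  obtain r where r: "R (x + s) = ereal r" using R_xs by (cases "R (x + s)") auto
  have model_le: "model fs gs R \<xi> x \<sigma> s \<le> model fs gs R \<xi> x \<sigma> (z - x)"
    using argmin unfolding is_argmin_model_def by blast
  show ?thesis
  proof (cases "R z")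
    case (real rz)
    define d where "d = z - (x + s)"
    have z_minus_x: "z - x = s + d" and z_eq: "x + (s + d) = z"
      unfolding d_def by simp_all
    have "inner (gsamp gs \<xi> x) s + r + \<sigma> / 2 * (norm s)\<^sup>2
        \<le> inner (gsamp gs \<xi> x) (s + d) + rz + \<sigma> / 2 * (norm (s + d))\<^sup>2"
      using model_le unfolding model_def psi_def z_minus_x by (simp add: r real z_eq)
    moreover have "(norm (s + d))\<^sup>2 = (norm s)\<^sup>2 + 2 * inner s d + (norm d)\<^sup>2"
      by (simp add: power2_norm_eq_inner inner_add_left inner_add_right inner_commute)
    ultimately show ?thesis
      unfolding d_def[symmetric] r real
      by (simp add: inner_add_left inner_add_right algebra_simps add_divide_distrib)
  next
    case MInf
    thus ?thesis using model_le unfolding model_def psi_def by (simp add: r)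
  qed simp
qed

lemma rho_zero_step:
  assumes "\<bar>R x\<bar> \<noteq> \<infinity>"
  shows "rho fs gs N R \<xi> x 0 = 0"
  using assms unfolding rho_def Let_def Fobj_def psi_def by (cases "R x") auto

lemma fbar_has_derivative:
  assumes "\<And>i. (fs i has_derivative (\<lambda>h. inner (gs i y) h)) (at y)"
  shows "(fbar fs N has_derivative (\<lambda>h. inner (gbar gs N y) h)) (at y)"
proof -
  have "((\<lambda>z. (\<Sum>i=1..N. fs i z) / real N) has_derivative
      (\<lambda>h. (\<Sum>i=1..N. inner (gs i y) h) / real N)) (at y)"
    using has_derivative_mult_right[OF has_derivative_sum[OF assms], of "inverse (real N)"]
    by (simp add: divide_inverse mult.commute)
  thus ?thesis
    by (simp add: fbar_def[abs_def] gbar_def inner_sum_left)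
qed

lemma norm_add3_squared_le:
  fixes a b c :: "'a::real_normed_vector"
  shows "(norm (a + b + c))\<^sup>2 \<le> 3 * ((norm a)\<^sup>2 + (norm b)\<^sup>2 + (norm c)\<^sup>2)"
proof -
  have "norm (a + b + c) \<le> norm a + norm b + norm c"
    by (metis add_right_mono norm_triangle_ineq order_trans)
  hence "(norm (a + b + c))\<^sup>2 \<le> (norm a + norm b + norm c)\<^sup>2"
    by (simp add: power_mono)
  also have "\<dots> \<le> 3 * ((norm a)\<^sup>2 + (norm b)\<^sup>2 + (norm c)\<^sup>2)"
    using sum_squares_ge_zero[of "norm a - norm b" "norm b - norm c"]
      zero_le_power2[of "norm a - norm c"]
    by (simp add: power2_eq_square algebra_simps)
  finally show ?thesis .
qed

lemma norm_lipschitz_step_minus_squared_le: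
  fixes g :: "'a::real_normed_vector \<Rightarrow> 'a"
  assumes "norm (g (x + s) - g x) \<le> L * norm s"
  shows "(norm (g (x + s) - (v + \<sigma> *\<^sub>R s)))\<^sup>2
           \<le> 3 * (L\<^sup>2 + \<sigma>\<^sup>2) * (norm s)\<^sup>2 + 3 * (norm (g x - v))\<^sup>2"
proof -
  have "g (x + s) - (v + \<sigma> *\<^sub>R s) = (g (x + s) - g x) + (g x - v) + (- (\<sigma> *\<^sub>R s))"
    by simp
  hence "(norm (g (x + s) - (v + \<sigma> *\<^sub>R s)))\<^sup>2
      \<le> 3 * ((norm (g (x + s) - g x))\<^sup>2 + (norm (g x - v))\<^sup>2 + (norm (\<sigma> *\<^sub>R s))\<^sup>2)"
    using norm_add3_squared_le by (metis norm_minus_cancel)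
  moreover have "(norm (g (x + s) - g x))\<^sup>2 \<le> L\<^sup>2 * (norm s)\<^sup>2"
    using assms by (metis norm_ge_zero power_mono power_mult_distrib)
  ultimately show ?thesis
    by (simp add: power_mult_distrib algebra_simps)
qed

lemma frechet_subdiff_at_argmin_model:
  fixes fs :: "nat \<Rightarrow> 'a::real_inner \<Rightarrow> real"
  assumes grad: "\<And>i. (fs i has_derivative (\<lambda>h. inner (gs i (x + s)) h)) (at (x + s))"
    and R_not_minf: "\<And>z. R z \<noteq> -\<infinity>"
    and R_x: "\<bar>R x\<bar> \<noteq> \<infinity>"
    and argmin: "is_argmin_model fs gs R \<xi> x \<sigma> s"
  shows "gbar gs N (x + s) - (gsamp gs \<xi> x + \<sigma> *\<^sub>R s) \<in> frechet_subdiff (Fobj fs N R) (x + s)"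
proof -
  have R_xs: "\<bar>R (x + s)\<bar> \<noteq> \<infinity>"
    using argmin_model_finite[OF argmin R_x R_not_minf] .
  have "Fobj fs N R = (\<lambda>z. ereal (fbar fs N z) + R z)"
    by (simp add: Fobj_def[abs_def])
  thus ?thesis
    using frechet_subgradient_of_quadratic_minorant[OF fbar_has_derivative[of fs gs "x + s", OF grad]
        R_xs argmin_model_quadratic_minorant[OF argmin R_xs]]
    by simp
qed

lemma dist_frechet_subdiff_at_argmin_model_le:
  fixes fs :: "nat \<Rightarrow> 'a::real_inner \<Rightarrow> real"
  assumes grad: "\<And>i. (fs i has_derivative (\<lambda>h. inner (gs i (x + s)) h)) (at (x + s))"
    and lipschitz: "norm (gbar gs N (x + s) - gbar gs N x) \<le> L * norm s"
    and R_not_minf: "\<And>z. R z \<noteq> -\<infinity>"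
    and R_x: "\<bar>R x\<bar> \<noteq> \<infinity>"
    and argmin: "is_argmin_model fs gs R \<xi> x \<sigma> s"
  shows "frechet_subdiff (Fobj fs N R) (x + s) \<noteq> {}"
    and "(infdist 0 (frechet_subdiff (Fobj fs N R) (x + s)))\<^sup>2
           \<le> 3 * (L\<^sup>2 + \<sigma>\<^sup>2) * (norm s)\<^sup>2 + 3 * (norm (gbar gs N x - gsamp gs \<xi> x))\<^sup>2"
proof -
  let ?v = "gbar gs N (x + s) - (gsamp gs \<xi> x + \<sigma> *\<^sub>R s)"
  have v: "?v \<in> frechet_subdiff (Fobj fs N R) (x + s)"
    using frechet_subdiff_at_argmin_model[OF grad R_not_minf R_x argmin] .
  thus "frechet_subdiff (Fobj fs N R) (x + s) \<noteq> {}" by blast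
  have "infdist 0 (frechet_subdiff (Fobj fs N R) (x + s)) \<le> norm ?v"
    using infdist_le[OF v, of 0] by simp
  hence "(infdist 0 (frechet_subdiff (Fobj fs N R) (x + s)))\<^sup>2 \<le> (norm ?v)\<^sup>2"
    by (simp add: power_mono infdist_nonneg)
  also have "\<dots> \<le> 3 * (L\<^sup>2 + \<sigma>\<^sup>2) * (norm s)\<^sup>2 + 3 * (norm (gbar gs N x - gsamp gs \<xi> x))\<^sup>2"
    using norm_lipschitz_step_minus_squared_le[OF lipschitz] .
  finally show "(infdist 0 (frechet_subdiff (Fobj fs N R) (x + s)))\<^sup>2
      \<le> 3 * (L\<^sup>2 + \<sigma>\<^sup>2) * (norm s)\<^sup>2 + 3 * (norm (gbar gs N x - gsamp gs \<xi> x))\<^sup>2" .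
qed

lemma dist_frechet_subdiff_at_successful_step_le:
  fixes fs :: "nat \<Rightarrow> 'a::real_inner \<Rightarrow> real"
  assumes grad: "\<And>i y. (fs i has_derivative (\<lambda>h. inner (gs i y) h)) (at y)"
    and lipschitz: "\<And>y z. norm (gbar gs N y - gbar gs N z) \<le> L * norm (y - z)"
    and R_not_minf: "\<And>z. R z \<noteq> -\<infinity>"
    and R_x: "\<bar>R x\<bar> \<noteq> \<infinity>"
    and successful: "0 < \<eta>" "\<eta> \<le> rho fs gs N R \<xi> x s"
    and step: "s = 0 \<or> is_argmin_model fs gs R \<xi> x \<sigma> s"
    and \<sigma>: "0 \<le> \<sigma>" "\<sigma> \<le> \<sigma>max"
  shows "frechet_subdiff (Fobj fs N R) (x + s) \<noteq> {} \<and>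
    (infdist 0 (frechet_subdiff (Fobj fs N R) (x + s)))\<^sup>2
      \<le> 3 * (L\<^sup>2 + \<sigma>max\<^sup>2) * (norm s)\<^sup>2 + 3 * (norm (gbar gs N x - gsamp gs \<xi> x))\<^sup>2"
proof -
  have "s \<noteq> 0"
    using successful rho_zero_step[of R x, OF R_x] by force
  hence argmin: "is_argmin_model fs gs R \<xi> x \<sigma> s"
    using step by blast
  have "norm (gbar gs N (x + s) - gbar gs N x) \<le> L * norm s"
    using lipschitz[of "x + s" x] by simp
  note bounds = dist_frechet_subdiff_at_argmin_model_le[OF grad this R_not_minf R_x argmin]
  have "3 * (L\<^sup>2 + \<sigma>\<^sup>2) * (norm s)\<^sup>2 \<le> 3 * (L\<^sup>2 + \<sigma>max\<^sup>2) * (norm s)\<^sup>2"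
    using \<sigma> by (intro mult_right_mono) (simp_all add: power_mono)
  thus ?thesis
    using bounds by linarith
qed

lemma lower_bound_preserved_by_updates:
  fixes \<sigma> :: "nat \<Rightarrow> real"
  assumes "\<sigma>min \<le> \<sigma> 0" "0 \<le> \<sigma>min" "1 \<le> \<gamma>"
    and "\<And>t. \<sigma>min \<le> \<sigma> (Suc t) \<or> \<sigma> t \<le> \<sigma> (Suc t) \<or> \<gamma> * \<sigma> t \<le> \<sigma> (Suc t)"
  shows "\<sigma>min \<le> \<sigma> t"
proof (induction t)
  case (Suc t)
  hence "\<sigma> t \<le> \<gamma> * \<sigma> t"
    using assms(2,3) by (simp add: mult_le_cancel_right1)
  thus ?case using Suc assms(4)[of t] by linarith
qed (use assms in simp)

lemma R_finite_at_iterates: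
  assumes R_x0: "\<bar>R (x 0)\<bar> \<noteq> \<infinity>"
    and R_not_minf: "\<And>z. R z \<noteq> -\<infinity>"
    and moves: "\<And>t. x (Suc t) = x t \<or> x (Suc t) = x t + s t"
    and steps: "\<And>t. s t = 0 \<or> is_argmin_model fs gs R (\<xi> t) (x t) (\<sigma> t) (s t)"
  shows "\<bar>R (x t)\<bar> \<noteq> \<infinity>"
proof (induction t)
  case (Suc t)
  have "\<bar>R (x t + s t)\<bar> \<noteq> \<infinity>"
    using steps[of t] Suc argmin_model_finite R_not_minf by fastforce
  thus ?case using moves[of t] Suc by auto
qed (use R_x0 in simp)

lemma hat_stationary_of_pointwise_bound:
  fixes s :: "nat set \<Rightarrow> 'a::euclidean_space" and P :: "nat set pmf"
  assumes P_finite: "finite (set_pmf P)"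
    and pointwise: "\<And>\<xi>. \<xi> \<in> set_pmf P \<Longrightarrow> frechet_subdiff F (x + s \<xi>) \<noteq> {} \<and>
        (infdist 0 (frechet_subdiff F (x + s \<xi>)))\<^sup>2 \<le> C * (norm (s \<xi>))\<^sup>2 + 3 * (norm (e \<xi>))\<^sup>2"
    and C: "0 \<le> C"
    and step_small: "measure_pmf.expectation P (\<lambda>\<xi>. (norm (s \<xi>))\<^sup>2) \<le> \<epsilon>\<^sup>2"
    and error_small: "measure_pmf.expectation P (\<lambda>\<xi>. (norm (e \<xi>))\<^sup>2) \<le> \<epsilon>\<^sup>2"
  shows "hat_stationary F P s x (Max ((\<lambda>\<xi>. norm (s \<xi>)) ` set_pmf P)) ((C + 3) * \<epsilon>)"
proof -
  have int: "\<And>f :: nat set \<Rightarrow> real. integrable (measure_pmf P) f"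
    by (rule integrable_measure_pmf_finite[OF P_finite])
  have "measure_pmf.expectation P (\<lambda>\<xi>. (infdist 0 (frechet_subdiff F (x + s \<xi>)))\<^sup>2)
      \<le> measure_pmf.expectation P (\<lambda>\<xi>. C * (norm (s \<xi>))\<^sup>2 + 3 * (norm (e \<xi>))\<^sup>2)"
    by (rule integral_mono_AE[OF int int]) (use pointwise in \<open>auto intro!: AE_pmfI\<close>)
  also have "\<dots> = C * measure_pmf.expectation P (\<lambda>\<xi>. (norm (s \<xi>))\<^sup>2)
      + 3 * measure_pmf.expectation P (\<lambda>\<xi>. (norm (e \<xi>))\<^sup>2)"
    using int by simp
  also have "\<dots> \<le> (C + 3) * \<epsilon>\<^sup>2"
    using C step_small error_small
    by (simp add: distrib_right add_mono mult_left_mono)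
  \<comment> \<open>The argument gives the radius sqrt (C + 3) * \<epsilon>; (C + 3) * \<epsilon> is weaker since C + 3 \<ge> 1.\<close>
  also have "\<dots> \<le> (C + 3) * ((C + 3) * \<epsilon>\<^sup>2)"
    using C by (intro mult_left_mono) (simp_all add: mult_le_cancel_right1)
  also have "\<dots> = ((C + 3) * \<epsilon>)\<^sup>2"
    by (simp add: power2_eq_square algebra_simps)
  finally show ?thesis
    unfolding hat_stationary_def using pointwise by blast
qed

theorem corollary1:
  fixes fs :: "nat \<Rightarrow> 'a::euclidean_space \<Rightarrow> real"
    and gs :: "nat \<Rightarrow> 'a \<Rightarrow> 'a"
    and N :: nat
    and R :: "'a \<Rightarrow> ereal"
    and \<eta>\<^sub>1 \<eta>\<^sub>2 \<gamma>\<^sub>1 \<gamma>\<^sub>2 \<gamma>\<^sub>3 \<sigma>min L \<kappa>m lam \<sigma>max \<epsilon> :: real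
    and x :: "nat \<Rightarrow> 'a"
    and \<sigma> :: "nat \<Rightarrow> real"
    and D :: "nat \<Rightarrow> nat set pmf"
    and \<xi>s :: "nat \<Rightarrow> nat set"
    and stp :: "nat \<Rightarrow> nat set \<Rightarrow> 'a"
  defines "succ \<equiv> \<lambda>t. {\<xi>. rho fs gs N R \<xi> (x t) (stp t \<xi>) \<ge> \<eta>\<^sub>1}"
  defines "Phat \<equiv> \<lambda>t. cond_pmf (D t) (succ t)"
  defines "t\<epsilon> \<equiv> (LEAST t. set_pmf (D t) \<inter> succ t \<noteq> {} \<and>
                      measure_pmf.expectation (Phat t) (\<lambda>\<xi>. (norm (stp t \<xi>))\<^sup>2) \<le> \<epsilon>\<^sup>2)"
  defines "C \<equiv> 3 * (L\<^sup>2 + \<sigma>max\<^sup>2)"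
  defines "\<delta> \<equiv> Max ((\<lambda>\<xi>. norm (stp t\<epsilon> \<xi>)) ` set_pmf (Phat t\<epsilon>))"
  \<comment> \<open>the problem: f = average of N differentiable components with gradients gs i\<close>
  assumes N_pos: "N \<ge> 1"
    and grad: "\<And>i y. (fs i has_derivative (\<lambda>h. inner (gs i y) h)) (at y)"
  \<comment> \<open>SR2 parameters\<close>
    and params: "0 < \<eta>\<^sub>1" "\<eta>\<^sub>1 \<le> \<eta>\<^sub>2" "\<eta>\<^sub>2 < 1" "0 < \<gamma>\<^sub>3" "\<gamma>\<^sub>3 \<le> 1" "1 < \<gamma>\<^sub>1" "\<gamma>\<^sub>1 \<le> \<gamma>\<^sub>2"
    and x0: "\<bar>R (x 0)\<bar> \<noteq> \<infinity>"
    and sig0: "0 < \<sigma>min" "\<sigma>min \<le> \<sigma> 0"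
  \<comment> \<open>samples: nonempty subsets of {1..N}, drawn from D t at iteration t\<close>
    and samples: "\<And>t. set_pmf (D t) \<subseteq> {\<xi>. \<xi> \<noteq> {} \<and> \<xi> \<subseteq> {1..N}}"
    and drawn: "\<And>t. \<xi>s t \<in> set_pmf (D t)"
  \<comment> \<open>step: a minimizer of the model, or 0 if the sample is deemed inadequate\<close>
    and step: "\<And>t \<xi>. \<xi> \<in> set_pmf (D t) \<Longrightarrow>
                 stp t \<xi> = 0 \<or> is_argmin_model fs gs R \<xi> (x t) (\<sigma> t) (stp t \<xi>)"
  \<comment> \<open>iterate and regularization parameter updates\<close>
    and x_upd: "\<And>t. x (Suc t) = (if rho fs gs N R (\<xi>s t) (x t) (stp t (\<xi>s t)) \<ge> \<eta>\<^sub>1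
                                   then x t + stp t (\<xi>s t) else x t)"
    and sig_upd: "\<And>t. let r = rho fs gs N R (\<xi>s t) (x t) (stp t (\<xi>s t)) in
                    (r \<ge> \<eta>\<^sub>2 \<longrightarrow> max \<sigma>min (\<gamma>\<^sub>3 * \<sigma> t) \<le> \<sigma> (Suc t) \<and> \<sigma> (Suc t) \<le> \<sigma> t) \<and>
                    (\<eta>\<^sub>1 \<le> r \<and> r < \<eta>\<^sub>2 \<longrightarrow> \<sigma> t \<le> \<sigma> (Suc t) \<and> \<sigma> (Suc t) \<le> \<gamma>\<^sub>1 * \<sigma> t) \<and>
                    (r < \<eta>\<^sub>1 \<longrightarrow> \<gamma>\<^sub>1 * \<sigma> t \<le> \<sigma> (Suc t) \<and> \<sigma> (Suc t) \<le> \<gamma>\<^sub>2 * \<sigma> t)"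
  \<comment> \<open>(A1)\<close>
    and L_pos: "L > 0"
    and lipschitz: "\<And>y z. norm (gbar gs N y - gbar gs N z) \<le> L * norm (y - z)"
    and R_proper: "proper_fun R"
    and R_lsc: "lsc_everywhere R"
    and R_prox: "\<And>t. prox_bounded (\<lambda>s. R (x t + s))"
  \<comment> \<open>(A3)\<close>
    and kappa_pos: "\<kappa>m > 0"
    and A3_model: "\<And>t. \<bar>fbar fs N (x t + stp t (\<xi>s t)) - fbar fs N (x t)
                        - inner (gsamp gs (\<xi>s t) (x t)) (stp t (\<xi>s t))\<bar>
                       \<le> \<kappa>m * (norm (stp t (\<xi>s t)))\<^sup>2"
    and A3_unbiased_f: "\<And>t. measure_pmf.expectation (D t) (\<lambda>\<xi>. fsamp fs \<xi> (x t)) = fbar fs N (x t)"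
    and A3_unbiased_g: "\<And>t. measure_pmf.expectation (D t) (\<lambda>\<xi>. gsamp gs \<xi> (x t)) = gbar gs N (x t)"
  \<comment> \<open>(A5)\<close>
    and lambda_pos: "lam > 0"
    and A5: "\<And>t. prox_threshold (\<lambda>s. R (x t + s)) \<ge> ereal lam"
  \<comment> \<open>sigma_max bounds all sigma_t\<close>
    and sig_max: "\<And>t. \<sigma> t \<le> \<sigma>max"
  \<comment> \<open>epsilon and the first iteration t(epsilon)\<close>
    and eps: "0 < \<epsilon>" "\<epsilon> < 1"
    and t_exists: "\<exists>t. set_pmf (D t) \<inter> succ t \<noteq> {} \<and>
                      measure_pmf.expectation (Phat t) (\<lambda>\<xi>. (norm (stp t \<xi>))\<^sup>2) \<le> \<epsilon>\<^sup>2"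
    and grad_err: "measure_pmf.expectation (Phat t\<epsilon>)
                     (\<lambda>\<xi>. (norm (gbar gs N (x t\<epsilon>) - gsamp gs \<xi> (x t\<epsilon>)))\<^sup>2) \<le> \<epsilon>\<^sup>2"
  shows "hat_stationary (Fobj fs N R) (Phat t\<epsilon>) (stp t\<epsilon>) (x t\<epsilon>) \<delta> ((C + 3) * \<epsilon>)"
proof -
  have R_not_minf: "\<And>z. R z \<noteq> -\<infinity>"
    using R_proper unfolding proper_fun_def by blast
  have "\<sigma>min \<le> \<sigma> (Suc t) \<or> \<sigma> t \<le> \<sigma> (Suc t) \<or> \<gamma>\<^sub>1 * \<sigma> t \<le> \<sigma> (Suc t)" for t
    using sig_upd[of t] unfolding Let_def by linarith
  hence "\<sigma>min \<le> \<sigma> t" for t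
    by (rule lower_bound_preserved_by_updates[of \<sigma>min \<sigma> \<gamma>\<^sub>1,
          OF sig0(2) less_imp_le[OF sig0(1)] less_imp_le[OF params(6)]])
  hence \<sigma>_pos: "0 < \<sigma> t" for t
    by (rule less_le_trans[OF sig0(1)])
  have R_finite: "\<bar>R (x t)\<bar> \<noteq> \<infinity>" for t
    by (rule R_finite_at_iterates[where s = "\<lambda>t. stp t (\<xi>s t)" and fs = fs and gs = gs
          and \<xi> = \<xi>s and \<sigma> = \<sigma>])
      (use x0 R_not_minf x_upd step drawn in auto)
  have t\<epsilon>: "set_pmf (D t\<epsilon>) \<inter> succ t\<epsilon> \<noteq> {} \<and>
      measure_pmf.expectation (Phat t\<epsilon>) (\<lambda>\<xi>. (norm (stp t\<epsilon> \<xi>))\<^sup>2) \<le> \<epsilon>\<^sup>2"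
    unfolding t\<epsilon>_def by (rule LeastI_ex[OF t_exists])
  hence set_Phat: "set_pmf (Phat t\<epsilon>) = set_pmf (D t\<epsilon>) \<inter> succ t\<epsilon>"
    unfolding Phat_def by (simp add: set_cond_pmf)
  have "finite (set_pmf (Phat t\<epsilon>))"
  proof (rule finite_subset)
    show "set_pmf (Phat t\<epsilon>) \<subseteq> Pow {1..N}"
      using set_Phat samples[of t\<epsilon>] by auto
  qed simp
  moreover have "frechet_subdiff (Fobj fs N R) (x t\<epsilon> + stp t\<epsilon> \<xi>) \<noteq> {} \<and>
      (infdist 0 (frechet_subdiff (Fobj fs N R) (x t\<epsilon> + stp t\<epsilon> \<xi>)))\<^sup>2
        \<le> C * (norm (stp t\<epsilon> \<xi>))\<^sup>2 + 3 * (norm (gbar gs N (x t\<epsilon>) - gsamp gs \<xi> (x t\<epsilon>)))\<^sup>2"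
    if "\<xi> \<in> set_pmf (Phat t\<epsilon>)" for \<xi>
    unfolding C_def
    using that set_Phat step \<sigma>_pos[of t\<epsilon>] sig_max[of t\<epsilon>] unfolding succ_def
    by (intro dist_frechet_subdiff_at_successful_step_le[where fs = fs and gs = gs and R = R and x = "x t\<epsilon>",
          OF grad lipschitz R_not_minf R_finite params(1)]) auto
  ultimately show ?thesis
    unfolding \<delta>_def
    by (rule hat_stationary_of_pointwise_bound) (use t\<epsilon> grad_err in \<open>simp_all add: C_def\<close>)
qed

end
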